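(* For every $\epsilon>0$ there exist $M\in\mathbb N$ and $R>0$ such that for all $m\ge M$ and all $r\ge R$, $$\mathbb E\big(v_m^r\big)\le(2+\epsilon)\log r.$$
   Context: Expectation is with respect to Lebesgue measure $\lambda$ on $[0,1)$; $\log$ is natural. For $m\in\mathbb N$, $j\in\mathbb N_0$, $i\in\{0,\dots,2^{m-1}-1\}$ let $J^m_{j,i}=[2^{-j}-(i+1)2^{-(j+m)},\,2^{-j}-i2^{-(j+m)})$ (these partition $(0,1)$) and $y_{j,i}=\frac{2^{j+m+1}}{2^m-i-1}$. For $r\ge1$, $v_m^r$ is the function constant on each $J^m_{j,i}$ with value $y_{\min\{j,\lfloor\log_2r\rfloor\},i}$. *)

theory Defs
  imports "HOL-Analysis.Analysis"
begin

definition Jint :: "nat \<Rightarrow> nat \<Rightarrow> nat \<Rightarrow> real set" where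
  "Jint m j i = {(1/2)^j - real (i+1) * (1/2)^(j+m) ..< (1/2)^j - real i * (1/2)^(j+m)}"

definition yval :: "nat \<Rightarrow> nat \<Rightarrow> nat \<Rightarrow> real" where
  "yval m j i = 2^(j+m+1) / (2^m - real i - 1)"

text \<open>v_m^r: constant on each J^m_{j,i} (i < 2^(m-1)) with value y_{min j floor(log2 r), i};
  set to 0 outside (0,1) where no such interval contains x (a null set).\<close>
definition vfun :: "nat \<Rightarrow> real \<Rightarrow> real \<Rightarrow> real" where
  "vfun m r x =
     (if \<exists>j i. i < 2^(m-1) \<and> x \<in> Jint m j i
      then (case (THE p. snd p < 2^(m-1) \<and> x \<in> Jint m (fst p) (snd p)) of
              (j, i) \<Rightarrow> yval m (min j (nat \<lfloor>log 2 r\<rfloor>)) i)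
      else 0)"

end

theory Submission
  imports Defs
begin

text \<open>With k = \<lfloor>log_2 r\<rfloor>, the value of v_m^r on J^m_{j,i} times the length 2^{-(j+m)} of
  that interval is 2 \<cdot> 2^{-(j - min j k)} / (2^m - i - 1).  Summing over i gives
  2 \<cdot> 2^{-(j - min j k)} S for the harmonic block S = \<Sum>_{i<2^{m-1}} 1/(2^m - i - 1), which
  comparison with ln bounds by ln 2 + 1/(2^m - 2); summing over j gives E(v_m^r) = 2(k + 2) S.
  Since k ln 2 \<le> ln r, this is 2 ln r + O(ln r / 2^m) + O(1).\<close>

lemma ln_diff_bounds:
  fixes y :: real
  assumes "y > 0"
  shows "1 / (y + 1) \<le> ln (y + 1) - ln y" and "ln (y + 1) - ln y \<le> 1 / y"
proof -
  have "ln (y / (y + 1)) \<le> y / (y + 1) - 1"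
    using assms by (intro ln_le_minus_one) auto
  moreover have "ln (y / (y + 1)) = ln y - ln (y + 1)"
    using assms by (simp add: ln_div)
  moreover have "y / (y + 1) - 1 = - (1 / (y + 1))"
    using assms by (simp add: field_simps)
  ultimately show "1 / (y + 1) \<le> ln (y + 1) - ln y" by linarith
  have "ln ((y + 1) / y) \<le> (y + 1) / y - 1"
    using assms by (intro ln_le_minus_one) auto
  moreover have "ln ((y + 1) / y) = ln (y + 1) - ln y"
    using assms by (simp add: ln_div)
  moreover have "(y + 1) / y - 1 = 1 / y"
    using assms by (simp add: field_simps)
  ultimately show "ln (y + 1) - ln y \<le> 1 / y" by linarith
qed

lemma sum_inverse_le_ln_diff:
  fixes a :: real
  assumes "real N < a"
  shows "(\<Sum>i<N. 1 / (a - real i)) \<le> ln a - ln (a - real N)"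
proof -
  define g where "g i = ln (a - real i)" for i :: nat
  have "(\<Sum>i<N. 1 / (a - real i)) \<le> (\<Sum>i<N. g i - g (Suc i))"
  proof (rule sum_mono)
    fix i assume "i \<in> {..<N}"
    then have "a - real i - 1 > 0" using assms by auto
    from ln_diff_bounds(1)[OF this]
    show "1 / (a - real i) \<le> g i - g (Suc i)" by (simp add: g_def algebra_simps)
  qed
  also have "\<dots> = g 0 - g N" by (rule sum_lessThan_telescope')
  finally show ?thesis by (simp add: g_def)
qed

lemma sum_harmonic_block_le:
  assumes "m \<ge> 2"
  shows "(\<Sum>i<(2::nat)^(m-1). 1 / (2^m - real i - 1)) \<le> ln 2 + 1 / (2^m - 2)"
proof -
  define N :: nat where "N = 2^(m-1)"
  have two_N: "(2::real)^m = 2 * real N"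
    using assms by (simp add: N_def power_Suc[symmetric])
  have "(2::nat)^1 \<le> 2^(m-1)" using assms by (intro power_increasing) auto
  then have N2: "real N \<ge> 2"
    unfolding N_def by (metis of_nat_le_iff of_nat_numeral power_one_right)
  have "(\<Sum>i<N. 1 / (2^m - real i - 1)) = (\<Sum>i<N. 1 / ((2 * real N - 1) - real i))"
    by (simp add: two_N algebra_simps)
  also have "\<dots> \<le> ln (2 * real N - 1) - ln (real N - 1)"
    using sum_inverse_le_ln_diff[of N "2 * real N - 1"] N2 by (simp add: algebra_simps)
  also have "\<dots> = (ln (2 * real N - 1) - ln (2 * real N - 2)) + ln 2"
    using N2 by (simp add: ln_mult_pos[symmetric] algebra_simps)
  also have "\<dots> \<le> 1 / (2 * real N - 2) + ln 2"
    using ln_diff_bounds(2)[of "2 * real N - 2"] N2 by simp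
  finally show ?thesis by (simp add: N_def two_N)
qed

lemma Jint_subset:
  assumes "m \<ge> 1" "i < 2^(m-1)"
  shows "Jint m j i \<subseteq> {(1/2)^Suc j ..< (1/2)^j}"
proof
  fix x assume x: "x \<in> Jint m j i"
  have "real (i + 1) \<le> 2^(m-1)"
    using assms(2) by (metis Suc_eq_plus1 Suc_leI of_nat_le_iff of_nat_numeral of_nat_power)
  then have "real (i + 1) * (1/2::real)^(j+m) \<le> 2^(m-1) * (1/2)^(j+m)"
    by (intro mult_right_mono) auto
  also have "\<dots> = (2 * (1/2))^(m-1) * (1/2)^Suc j"
  proof -
    have "j + m = Suc j + (m-1)" using assms(1) by simp
    then show ?thesis by (simp only: power_add power_mult_distrib mult_ac)
  qed
  also have "\<dots> = (1/2)^Suc j" by simp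
  finally have "real (i + 1) * (1/2::real)^(j+m) \<le> (1/2)^Suc j" .
  moreover have "0 \<le> real i * (1/2::real)^(j+m)" by simp
  moreover have "(1/2)^j - real (i+1) * (1/2)^(j+m) \<le> x" "x < (1/2)^j - real i * (1/2)^(j+m)"
    using x by (auto simp: Jint_def)
  moreover have "(1/2::real)^j = 2 * (1/2)^Suc j" by simp
  ultimately show "x \<in> {(1/2)^Suc j ..< (1/2)^j}" unfolding atLeastLessThan_iff by linarith
qed

lemma Jint_unique:
  assumes "m \<ge> 1" "i < 2^(m-1)" "i' < 2^(m-1)" "x \<in> Jint m j i" "x \<in> Jint m j' i'"
  shows "j = j'" and "i = i'"
proof -
  have j_le: "j \<le> j'"
    if "x \<in> {(1/2::real)^Suc j ..< (1/2)^j}" "x \<in> {(1/2)^Suc j' ..< (1/2)^j'}" for j j' :: nat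
  proof (rule ccontr)
    assume "\<not> j \<le> j'"
    then have "(1/2::real)^j \<le> (1/2)^Suc j'" by (intro power_decreasing) auto
    then show False using that by auto
  qed
  have "x \<in> {(1/2::real)^Suc j ..< (1/2)^j}" "x \<in> {(1/2)^Suc j' ..< (1/2)^j'}"
    using subsetD[OF Jint_subset[OF assms(1,2)] assms(4)]
      subsetD[OF Jint_subset[OF assms(1,3)] assms(5)] by auto
  then show jj: "j = j'" using j_le by (simp add: le_antisym)
  have i_le: "i \<le> i'" if "x \<in> Jint m j i" "x \<in> Jint m j i'" for i i' :: nat
  proof (rule ccontr)
    assume "\<not> i \<le> i'"
    then have "real (i' + 1) * (1/2::real)^(j+m) \<le> real i * (1/2)^(j+m)"
      by (intro mult_right_mono) auto
    moreover have "(1/2)^j - real (i'+1) * (1/2::real)^(j+m) \<le> x"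
      "x < (1/2)^j - real i * (1/2)^(j+m)"
      using that unfolding Jint_def by auto
    ultimately show False by linarith
  qed
  show "i = i'" using i_le assms(4,5) jj by (simp add: le_antisym)
qed

lemma vfun_eq_yval:
  assumes "m \<ge> 1" "i < 2^(m-1)" "x \<in> Jint m j i"
  shows "vfun m r x = yval m (min j (nat \<lfloor>log 2 r\<rfloor>)) i"
proof -
  have "(THE p. snd p < 2^(m-1) \<and> x \<in> Jint m (fst p) (snd p)) = (j, i)"
  proof (rule the_equality)
    fix p :: "nat \<times> nat"
    assume "snd p < 2^(m-1) \<and> x \<in> Jint m (fst p) (snd p)"
    then show "p = (j, i)"
      using Jint_unique[OF assms(1,2) _ assms(3)] by (cases p) auto
  qed (use assms in simp)
  then show ?thesis using assms unfolding vfun_def by auto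
qed

lemma yval_denominator_pos:
  assumes "m \<ge> 1" "i < (2::nat)^(m-1)"
  shows "(2::real)^m - real i - 1 > 0"
proof -
  obtain n where m: "m = Suc n" using assms(1) by (cases m) auto
  have "real (i + 1) \<le> real ((2::nat)^n)"
    using assms(2) m by (simp only: of_nat_le_iff) simp
  then show ?thesis using m by simp
qed

lemma Jint_measurable [measurable]: "Jint m j i \<in> sets borel"
  unfolding Jint_def by simp

lemma emeasure_Jint: "emeasure lborel (Jint m j i) = ennreal ((1/2)^(j+m))"
proof -
  have "real i * (1/2::real)^(j+m) \<le> real (i+1) * (1/2)^(j+m)"
    by (intro mult_right_mono) auto
  then show ?thesis
    unfolding Jint_def by (subst emeasure_lborel_Ico) (auto simp: algebra_simps)
qed

lemma yval_mult_length:
  assumes "k \<le> j"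
  shows "yval m k i * (1/2)^(j+m) = 2 * (1/2)^(j - k) / (2^m - real i - 1)"
proof -
  obtain d where j: "j = k + d" using assms le_Suc_ex by blast
  have "(2::real)^(k+m+1) * (1/2)^(k+d+m) = 2 * (1/2)^d"
    by (simp add: power_add field_simps)
  then show ?thesis unfolding yval_def j by (simp add: divide_simps mult_ac)
qed

lemma sums_clipped_geometric:
  "(\<lambda>j. (1/2::real)^(j - min j k)) sums (real k + 2)"
proof -
  let ?a = "\<lambda>j. (1/2::real)^(j - min j k)"
  have "(\<lambda>n. ?a (n + Suc k)) = (\<lambda>n. (1/2) * (1/2)^n)" by (auto simp: fun_eq_iff)
  moreover have "(\<lambda>n. (1/2::real) * (1/2)^n) sums 1"
    using sums_mult[OF geometric_sums[of "1/2::real"], of "1/2"] by simp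
  ultimately have "?a sums (1 + (\<Sum>j<Suc k. ?a j))"
    using sums_iff_shift[of ?a "Suc k" 1] by simp
  then show ?thesis by (simp add: add.commute)
qed

lemma vfun_le_suminf_blocks:
  assumes "m \<ge> 1"
  shows "ennreal (vfun m r x) \<le> (\<Sum>j. \<Sum>i<2^(m-1).
           ennreal (yval m (min j (nat \<lfloor>log 2 r\<rfloor>)) i) * indicator (Jint m j i) x)"
    (is "_ \<le> (\<Sum>j. ?G j)")
proof (cases "\<exists>j i. i < 2^(m-1) \<and> x \<in> Jint m j i")
  case True
  then obtain j i where ji: "i < 2^(m-1)" "x \<in> Jint m j i" by blast
  have "ennreal (vfun m r x) = ennreal (yval m (min j (nat \<lfloor>log 2 r\<rfloor>)) i) * indicator (Jint m j i) x"
    using vfun_eq_yval[OF assms ji] ji(2) by simp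
  also have "\<dots> \<le> ?G j" by (rule member_le_sum) (use ji in auto)
  also have "\<dots> \<le> (\<Sum>j. ?G j)"
    using sum_le_suminf[OF summableI, of "{j}" ?G] by simp
  finally show ?thesis .
next
  case False
  then have "vfun m r x = 0" unfolding vfun_def by auto
  then show ?thesis by simp
qed

lemma nn_integral_block:
  assumes "m \<ge> 1"
  shows "(\<Sum>i<2^(m-1). \<integral>\<^sup>+ x. ennreal (yval m (min j k) i) * indicator (Jint m j i) x \<partial>lborel)
    = ennreal (2 * (1/2)^(j - min j k) * (\<Sum>i<(2::nat)^(m-1). 1 / (2^m - real i - 1)))"
proof -
  have "(\<integral>\<^sup>+ x. ennreal (yval m (min j k) i) * indicator (Jint m j i) x \<partial>lborel)
      = ennreal (2 * (1/2)^(j - min j k) * (1 / (2^m - real i - 1)))"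
    if "i < 2^(m-1)" for i
  proof -
    have D: "(2::real)^m - real i - 1 > 0" using yval_denominator_pos[OF assms that] .
    have "(\<integral>\<^sup>+ x. ennreal (yval m (min j k) i) * indicator (Jint m j i) x \<partial>lborel)
        = ennreal (yval m (min j k) i) * ennreal ((1/2)^(j+m))"
      by (subst nn_integral_cmult_indicator) (simp_all add: Jint_measurable emeasure_Jint)
    also have "\<dots> = ennreal (yval m (min j k) i * (1/2)^(j+m))"
      using D by (subst ennreal_mult) (auto simp: yval_def)
    finally show ?thesis by (simp add: yval_mult_length)
  qed
  then have "(\<Sum>i<2^(m-1). \<integral>\<^sup>+ x. ennreal (yval m (min j k) i) * indicator (Jint m j i) x \<partial>lborel)
      = (\<Sum>i<2^(m-1). ennreal (2 * (1/2)^(j - min j k) * (1 / (2^m - real i - 1))))"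
    by (intro sum.cong) auto
  also have "\<dots> = ennreal (\<Sum>i<2^(m-1). 2 * (1/2)^(j - min j k) * (1 / (2^m - real i - 1)))"
    using yval_denominator_pos[OF assms] by (intro sum_ennreal) (auto simp: less_imp_le)
  finally show ?thesis by (simp add: sum_distrib_left)
qed

lemma nn_integral_vfun_le:
  assumes "m \<ge> 1"
  shows "(\<integral>\<^sup>+ x \<in> {0..<1}. ennreal (vfun m r x) \<partial>lborel)
    \<le> ennreal (2 * (real (nat \<lfloor>log 2 r\<rfloor>) + 2) * (\<Sum>i<(2::nat)^(m-1). 1 / (2^m - real i - 1)))"
proof -
  define k where "k = nat \<lfloor>log 2 r\<rfloor>"
  define S where "S = (\<Sum>i<(2::nat)^(m-1). 1 / (2^m - real i - 1))"
  define G where "G j i x = ennreal (yval m (min j k) i) * indicator (Jint m j i) x" for j i x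
  have S_nonneg: "S \<ge> 0"
    unfolding S_def using yval_denominator_pos[OF assms] by (intro sum_nonneg) (auto simp: less_imp_le)
  have G_measurable [measurable]: "G j i \<in> borel_measurable lborel" for j i
    unfolding G_def by measurable
  have "(\<integral>\<^sup>+ x \<in> {0..<1}. ennreal (vfun m r x) \<partial>lborel) \<le> (\<integral>\<^sup>+ x. (\<Sum>j. \<Sum>i<2^(m-1). G j i x) \<partial>lborel)"
  proof (rule nn_integral_mono)
    fix x
    have "ennreal (vfun m r x) * indicator {0..<1} x \<le> ennreal (vfun m r x)"
      by (simp split: split_indicator)
    also have "\<dots> \<le> (\<Sum>j. \<Sum>i<2^(m-1). G j i x)"
      unfolding G_def k_def by (rule vfun_le_suminf_blocks[OF assms])
    finally show "ennreal (vfun m r x) * indicator {0..<1} x \<le> (\<Sum>j. \<Sum>i<2^(m-1). G j i x)" .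
  qed
  also have "\<dots> = (\<Sum>j. \<Sum>i<2^(m-1). \<integral>\<^sup>+ x. G j i x \<partial>lborel)"
    by (simp add: nn_integral_suminf nn_integral_sum)
  also have "\<dots> = (\<Sum>j. ennreal (2 * (1/2)^(j - min j k) * S))"
    unfolding G_def S_def by (simp only: nn_integral_block[OF assms])
  also have "\<dots> = ennreal (\<Sum>j. 2 * (1/2)^(j - min j k) * S)"
    using sums_clipped_geometric[of k] S_nonneg
    by (intro suminf_ennreal2) (auto intro: summable_mult2 summable_mult simp: sums_iff)
  also have "(\<Sum>j. 2 * (1/2::real)^(j - min j k) * S) = 2 * (real k + 2) * S"
    using sums_mult2[OF sums_mult[OF sums_clipped_geometric[of k], of 2], of S] by (simp add: sums_iff)
  finally show ?thesis unfolding k_def S_def .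
qed

lemma nn_integral_vfun_le_ln:
  assumes "m \<ge> 2" "r \<ge> 1"
  shows "(\<integral>\<^sup>+ x \<in> {0..<1}. ennreal (vfun m r x) \<partial>lborel)
    \<le> ennreal (2 * ln r + 4 * ln 2 + 2 * (log 2 r + 2) / (2^m - 2))"
proof -
  define k where "k = real (nat \<lfloor>log 2 r\<rfloor>)"
  define \<delta> :: real where "\<delta> = 1 / (2^m - 2)"
  have "log 2 r \<ge> 0" using assms(2) by simp
  then have k: "0 \<le> k" "k \<le> log 2 r" unfolding k_def by linarith+
  have "(2::real)^2 \<le> 2^m" using assms(1) by (intro power_increasing) auto
  then have "\<delta> \<ge> 0" by (simp add: \<delta>_def)
  have "2 * (k + 2) * (\<Sum>i<(2::nat)^(m-1). 1 / (2^m - real i - 1)) \<le> 2 * (k + 2) * (ln 2 + \<delta>)"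
    using sum_harmonic_block_le[OF assms(1)] k by (intro mult_left_mono) (auto simp: \<delta>_def)
  also have "\<dots> \<le> 2 * (log 2 r + 2) * (ln 2 + \<delta>)"
    using k \<open>\<delta> \<ge> 0\<close> by (intro mult_right_mono) auto
  also have "\<dots> = 2 * (log 2 r * ln 2) + 4 * ln 2 + 2 * (log 2 r + 2) * \<delta>"
    by (simp add: algebra_simps)
  also have "\<dots> = 2 * ln r + 4 * ln 2 + 2 * (log 2 r + 2) / (2^m - 2)"
    by (simp add: log_def \<delta>_def)
  finally have "2 * (k + 2) * (\<Sum>i<(2::nat)^(m-1). 1 / (2^m - real i - 1))
      \<le> 2 * ln r + 4 * ln 2 + 2 * (log 2 r + 2) / (2^m - 2)" .
  moreover have "m \<ge> 1" using assms(1) by simp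
  ultimately show ?thesis
    using nn_integral_vfun_le[of m r] unfolding k_def by (meson ennreal_leI order_trans)
qed

lemma ln_error_term_le:
  fixes \<epsilon> D r :: real
  assumes "\<epsilon> > 0" "D \<ge> 2" "D \<ge> 8 / \<epsilon>" "ln r \<ge> 10 / \<epsilon>"
  shows "4 * ln 2 + 2 * (log 2 r + 2) / D \<le> \<epsilon> * ln r"
proof -
  have "ln r \<ge> 0" using assms(4) divide_pos_pos[of 10 \<epsilon>] assms(1) by linarith
  have "ln r * 1 \<le> ln r * (2 * ln 2)"
    using ln2_ge_two_thirds \<open>ln r \<ge> 0\<close> by (intro mult_left_mono) auto
  then have "log 2 r \<le> 2 * ln r" by (simp add: log_def divide_simps mult_ac)
  moreover have "1 / D \<le> \<epsilon> / 8"
    using assms(1-3) by (simp add: divide_simps mult.commute)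
  moreover have "log 2 r \<ge> 0" using \<open>ln r \<ge> 0\<close> by (simp add: log_def)
  ultimately have "log 2 r * (1 / D) \<le> (2 * ln r) * (\<epsilon> / 8)"
    using assms(1,2) by (intro mult_mono) auto
  moreover have "4 / D \<le> 2" using assms(2) by (simp add: divide_simps)
  moreover have "\<epsilon> * ln r \<ge> 10" using assms(1,4) by (simp add: divide_simps mult.commute)
  moreover have "4 * ln (2::real) \<le> 3" using ln2_le_25_over_36 by simp
  ultimately show ?thesis by (simp add: add_divide_distrib field_simps)
qed

theorem mainTheorem15:
  fixes \<epsilon> :: real
  assumes "\<epsilon> > 0"
  shows "\<exists>M::nat. \<exists>R::real. M \<ge> 1 \<and> R > 0 \<and>
           (\<forall>m r. m \<ge> M \<longrightarrow> r \<ge> R \<longrightarrow> r \<ge> 1 \<longrightarrow>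
              (\<integral>\<^sup>+ x \<in> {0..<1}. ennreal (vfun m r x) \<partial>lborel)
                \<le> ennreal ((2 + \<epsilon>) * ln r))"
proof (intro exI[of _ "nat \<lceil>8 / \<epsilon>\<rceil> + 2"] exI[of _ "exp (10 / \<epsilon>)"] conjI allI impI)
  fix m :: nat and r :: real
  assume m: "nat \<lceil>8 / \<epsilon>\<rceil> + 2 \<le> m" and r: "exp (10 / \<epsilon>) \<le> r" "r \<ge> 1"
  have "real m < 2^m" using less_exp[of m] by (metis of_nat_less_iff of_nat_numeral of_nat_power)
  then have "(2::real)^m - 2 \<ge> 8 / \<epsilon>" using m by linarith
  moreover have "(2::real)^2 \<le> 2^m" using m by (intro power_increasing) auto
  moreover have "ln r \<ge> 10 / \<epsilon>" using r by (metis exp_gt_zero ln_exp ln_le_cancel_iff order_less_le_trans)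
  ultimately have "2 * ln r + 4 * ln 2 + 2 * (log 2 r + 2) / (2^m - 2) \<le> (2 + \<epsilon>) * ln r"
    using ln_error_term_le[OF assms] by (simp add: algebra_simps)
  moreover have "m \<ge> 2" using m by simp
  ultimately show "(\<integral>\<^sup>+ x \<in> {0..<1}. ennreal (vfun m r x) \<partial>lborel) \<le> ennreal ((2 + \<epsilon>) * ln r)"
    using nn_integral_vfun_le_ln[of m r] r(2) by (meson ennreal_leI order_trans)
qed simp_all

end
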